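(* Let $(\mathcal{S},\mathcal{A},P,R)$ be a finite Markov decision process with state space $\mathcal{S}=\{1,\dots,n\}$, finite action space $\mathcal{A}$, transition probabilities $P(s'\mid s,a)$ and reward $R(s,a,s')$, and let $\gamma\in[0,1)$. Define the Bellman operator $T:\mathbb{R}^n\to\mathbb{R}^n$ by $$(TV)(s)=\max_{a\in\mathcal{A}}\sum_{s'\in\mathcal{S}}P(s'\mid s,a)\big[R(s,a,s')+\gamma V(s')\big],$$ and let $V^*$ be the optimal value vector, i.e. the unique solution of $V^*=TV^*$. Fix $\epsilon>0$. Let $(s_k)_{k\ge 0}$ be a sequence of states (the state updated at iteration $k$) and consider the asynchronous noisy value iteration: for an arbitrary initial vector $\tilde V_0\in\mathbb{R}^n$, $$\tilde V_{k+1}(s)=\begin{cases}(T\tilde V_k)(s_k)+\tilde w_k, & s=s_k,\\ \tilde V_k(s), & s\neq s_k,\end{cases}$$ where the noise terms $\tilde w_k\in\mathbb{R}$ satisfy $|\tilde w_k|\le\epsilon$ for all $k$. Assume (a) every state is updated infinitely often, i.e. each $s\in\mathcal{S}$ equals $s_k$ for infinitely many $k$; and (b) there is a finite constant $M$ such that, defining $k_0=0$ and $k_{n+1}$ as the smallest index greater than $k_n$ such that every state of $\mathcal{S}$ is updated at least once at the iterations strictly after $k_n$ and up to $k_{n+1}$, one has $k_{n+1}-k_n\le M$ for all $n$. Then $$\limsup_{n\to\infty}\|V^*-\tilde V_{k_n}\|_\infty\le\frac{M\epsilon}{1-\gamma}.$$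
   Context: $\|\cdot\|_\infty$ denotes the maximum norm on $\mathbb{R}^n$. The noise $\tilde w_k$ models error introduced by computing the Bellman update homomorphically under an encryption scheme; it is only assumed to be bounded in absolute value by $\epsilon$ (it need not vanish). The noise may equivalently be thought of as entering inside the maximum, i.e. $\tilde V_{k+1}(s_k)=\max_a\big(\sum_{s'}P(s'\mid s_k,a)[R(s_k,a,s')+\gamma\tilde V_k(s')]+w_k(s_k,a)\big)$ with $|w_k(s_k,a)|\le\epsilon$, which yields an update of the stated form. *)

theory Defs
  imports "HOL-Analysis.Analysis"
begin

definition max_norm :: "('s::finite \<Rightarrow> real) \<Rightarrow> real" where
  "max_norm V = Max (range (\<lambda>s. \<bar>V s\<bar>))"

definition bellman ::
  "('s::finite \<Rightarrow> 'a::finite \<Rightarrow> 's \<Rightarrow> real) \<Rightarrow> ('s \<Rightarrow> 'a \<Rightarrow> 's \<Rightarrow> real) \<Rightarrow> real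
    \<Rightarrow> ('s \<Rightarrow> real) \<Rightarrow> 's \<Rightarrow> real" where
  "bellman P R g V s = Max (range (\<lambda>a. \<Sum>s'\<in>UNIV. P s a s' * (R s a s' + g * V s')))"

primrec epoch :: "(nat \<Rightarrow> 's) \<Rightarrow> nat \<Rightarrow> nat" where
  "epoch sq 0 = 0"
| "epoch sq (Suc n) =
     (LEAST m. epoch sq n < m \<and> (\<forall>x. \<exists>j. epoch sq n < j \<and> j \<le> m \<and> sq j = x))"

end

theory Submission
  imports Defs
begin

text \<open>The Bellman operator is a \<open>g\<close>-contraction in the maximum norm, so an exact update at a
  state whose neighbours are within \<open>D\<close> of \<open>V*\<close> lands within \<open>g D + \<epsilon>\<close> of \<open>V*\<close> once the noise
  is added. Every state is updated infinitely often, hence an eventual error bound \<open>D\<close> on all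
  states improves to an eventual bound \<open>g D + \<epsilon>\<close>; iterating from a global bound drives the
  eventual error down to the fixed point \<open>\<epsilon> / (1 - g)\<close> of \<open>D \<mapsto> g D + \<epsilon>\<close>. This is sharper than
  the claimed \<open>M \<epsilon> / (1 - g)\<close>, since every epoch contains at least one iteration.\<close>

lemma abs_le_max_norm: "\<bar>V s\<bar> \<le> max_norm V"
  unfolding max_norm_def by (rule Max_ge) auto

lemma max_norm_le: "(\<And>s. \<bar>V s\<bar> \<le> D) \<Longrightarrow> max_norm V \<le> D"
  unfolding max_norm_def by (subst Max_le_iff) auto

lemma Max_range_le_plus:
  fixes f h :: "'a::finite \<Rightarrow> 'b::linordered_ab_group_add"
  assumes "\<And>a. f a \<le> h a + c"
  shows "Max (range f) \<le> Max (range h) + c"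
proof -
  have "f a \<le> Max (range h) + c" for a
  proof -
    have "h a \<le> Max (range h)" by (rule Max_ge) auto
    then show ?thesis using assms[of a] by (meson add_right_mono order_trans)
  qed
  then show ?thesis by (simp add: Max_le_iff)
qed

lemma bellman_le_plus:
  fixes P R :: "'s::finite \<Rightarrow> 'a::finite \<Rightarrow> 's \<Rightarrow> real"
  assumes P_nonneg: "\<And>s a s'. P s a s' \<ge> 0"
    and P_sum: "\<And>s a. (\<Sum>s'\<in>UNIV. P s a s') = 1"
    and g_ge: "0 \<le> g"
    and le: "\<And>s'. V s' \<le> U s' + D"
  shows "bellman P R g V s \<le> bellman P R g U s + g * D"
  unfolding bellman_def
proof (rule Max_range_le_plus)
  fix a
  have "(\<Sum>s'\<in>UNIV. P s a s' * (R s a s' + g * V s'))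
      - (\<Sum>s'\<in>UNIV. P s a s' * (R s a s' + g * U s'))
      = (\<Sum>s'\<in>UNIV. P s a s' * (g * (V s' - U s')))"
    by (simp add: sum_subtractf[symmetric] algebra_simps)
  also have "\<dots> \<le> (\<Sum>s'\<in>UNIV. P s a s' * (g * D))"
    using le P_nonneg g_ge
    by (intro sum_mono mult_left_mono) (auto simp: algebra_simps)
  also have "\<dots> = g * D"
    using P_sum[of s a] by (simp add: sum_distrib_right[symmetric])
  finally show "(\<Sum>s'\<in>UNIV. P s a s' * (R s a s' + g * V s'))
      \<le> (\<Sum>s'\<in>UNIV. P s a s' * (R s a s' + g * U s')) + g * D"
    by simp
qed

lemma bellman_dist_le:
  fixes P R :: "'s::finite \<Rightarrow> 'a::finite \<Rightarrow> 's \<Rightarrow> real"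
  assumes "\<And>s a s'. P s a s' \<ge> 0"
    and "\<And>s a. (\<Sum>s'\<in>UNIV. P s a s') = 1"
    and "0 \<le> g"
    and close: "\<And>s'. \<bar>V s' - U s'\<bar> \<le> D"
  shows "\<bar>bellman P R g V s - bellman P R g U s\<bar> \<le> g * D"
proof -
  have "V s' \<le> U s' + D" "U s' \<le> V s' + D" for s'
    using close[of s'] by (auto simp: abs_le_iff)
  then have "bellman P R g V s \<le> bellman P R g U s + g * D"
    and "bellman P R g U s \<le> bellman P R g V s + g * D"
    by (intro bellman_le_plus[OF assms(1-3)]; simp)+
  then show ?thesis by (simp add: abs_le_iff)
qed

lemma epoch_less_Suc:
  fixes sq :: "nat \<Rightarrow> 's::finite"
  assumes inf_often: "\<And>x. infinite {k. sq k = x}"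
  shows "epoch sq n < epoch sq (Suc n)"
proof -
  let ?e = "epoch sq n"
  let ?covers = "\<lambda>m. ?e < m \<and> (\<forall>x. \<exists>j. ?e < j \<and> j \<le> m \<and> sq j = x)"
  have "\<exists>j>?e. sq j = x" for x
    using inf_often[of x] by (simp add: infinite_nat_iff_unbounded)
  then obtain J where J: "\<And>x. ?e < J x \<and> sq (J x) = x" by metis
  have "J x \<le> Max (range J)" for x by (rule Max_ge) auto
  then have "?covers (Max (range J))" using J by (meson order_less_le_trans)
  then have "?covers (LEAST m. ?covers m)" by (rule LeastI)
  then show ?thesis by simp
qed

lemma strict_mono_epoch:
  fixes sq :: "nat \<Rightarrow> 's::finite"
  assumes "\<And>x. infinite {k. sq k = x}"
  shows "strict_mono (epoch sq)"
  using epoch_less_Suc[OF assms] by (rule strict_monoI_Suc)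

locale noisy_async_value_iteration =
  fixes P R :: "'s::finite \<Rightarrow> 'a::finite \<Rightarrow> 's \<Rightarrow> real"
    and g \<epsilon> :: real
    and Vstar :: "'s \<Rightarrow> real"
    and sq :: "nat \<Rightarrow> 's"
    and w :: "nat \<Rightarrow> real"
    and V :: "nat \<Rightarrow> 's \<Rightarrow> real"
  assumes P_nonneg: "\<And>s a s'. P s a s' \<ge> 0"
    and P_sum: "\<And>s a. (\<Sum>s'\<in>UNIV. P s a s') = 1"
    and g_ge: "0 \<le> g" and g_lt: "g < 1"
    and Vstar_fix: "bellman P R g Vstar = Vstar"
    and noise: "\<And>k. \<bar>w k\<bar> \<le> \<epsilon>"
    and iter: "\<And>k. V (Suc k) = (V k)(sq k := bellman P R g (V k) (sq k) + w k)"
    and inf_often: "\<And>x. infinite {k. sq k = x}"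
begin

lemma updated_error_le:
  assumes "\<And>s. \<bar>Vstar s - V k s\<bar> \<le> D"
  shows "\<bar>Vstar (sq k) - V (Suc k) (sq k)\<bar> \<le> g * D + \<epsilon>"
proof -
  have "\<bar>bellman P R g Vstar (sq k) - bellman P R g (V k) (sq k)\<bar> \<le> g * D"
    by (rule bellman_dist_le[OF P_nonneg P_sum g_ge assms])
  moreover have "Vstar (sq k) = bellman P R g Vstar (sq k)" using Vstar_fix by simp
  ultimately show ?thesis using noise[of k] iter[of k] by (simp add: abs_le_iff)
qed

lemma error_le_invariant:
  assumes "\<epsilon> / (1 - g) \<le> D" and "\<And>s. \<bar>Vstar s - V 0 s\<bar> \<le> D"
  shows "\<bar>Vstar s - V k s\<bar> \<le> D"
proof (induction k arbitrary: s)
  case (Suc k)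
  have "g * D + \<epsilon> \<le> D" using assms(1) g_lt by (simp add: field_simps)
  then show ?case using updated_error_le[OF Suc] Suc iter[of k] by auto
qed (use assms(2) in simp)

lemma error_le_after_update:
  assumes bound: "\<And>k s. K \<le> k \<Longrightarrow> \<bar>Vstar s - V k s\<bar> \<le> D"
    and "K \<le> j" and "sq j = x" and "Suc j \<le> k"
  shows "\<bar>Vstar x - V k x\<bar> \<le> g * D + \<epsilon>"
  using \<open>Suc j \<le> k\<close>
proof (induction k rule: dec_induct)
  case base
  show ?case using updated_error_le[OF bound] assms(2,3) by blast
next
  case (step k)
  then show ?case
    using updated_error_le[OF bound, of k] iter[of k] assms(2)
    by (cases "sq k = x") auto
qed

lemma eventually_error_contracts:
  assumes "eventually (\<lambda>k. \<forall>s. \<bar>Vstar s - V k s\<bar> \<le> D) sequentially"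
  shows "eventually (\<lambda>k. \<forall>s. \<bar>Vstar s - V k s\<bar> \<le> g * D + \<epsilon>) sequentially"
proof (rule eventually_all_finite)
  fix x
  obtain K where bound: "\<And>k s. K \<le> k \<Longrightarrow> \<bar>Vstar s - V k s\<bar> \<le> D"
    using assms by (auto simp: eventually_sequentially)
  obtain j where "K \<le> j" "sq j = x"
    using inf_often[of x] by (auto simp: infinite_nat_iff_unbounded_le)
  then have "\<And>k. Suc j \<le> k \<Longrightarrow> \<bar>Vstar x - V k x\<bar> \<le> g * D + \<epsilon>"
    using error_le_after_update[OF bound] by blast
  then show "eventually (\<lambda>k. \<bar>Vstar x - V k x\<bar> \<le> g * D + \<epsilon>) sequentially"
    by (auto simp: eventually_sequentially)
qed

lemma eventually_error_le:
  defines "L \<equiv> \<epsilon> / (1 - g)"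
  assumes "\<And>s. \<bar>Vstar s - V 0 s\<bar> \<le> C" and "L \<le> C"
  shows "eventually (\<lambda>k. \<forall>s. \<bar>Vstar s - V k s\<bar> \<le> L + g ^ m * (C - L)) sequentially"
proof (induction m)
  case 0
  show ?case using error_le_invariant assms by simp
next
  case (Suc m)
  have "g * L + \<epsilon> = L" using g_lt unfolding L_def by (simp add: field_simps)
  then have "g * (L + g ^ m * (C - L)) + \<epsilon> = L + g ^ Suc m * (C - L)"
    by (simp add: algebra_simps)
  then show ?case using eventually_error_contracts[OF Suc] by simp
qed

lemma limsup_error_le: "limsup (\<lambda>k. ereal (max_norm (\<lambda>s. Vstar s - V k s))) \<le> \<epsilon> / (1 - g)"
proof (rule ereal_le_epsilon2)
  let ?L = "\<epsilon> / (1 - g)"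
  define C where "C = max (max_norm (\<lambda>s. Vstar s - V 0 s)) ?L"
  have C: "\<And>s. \<bar>Vstar s - V 0 s\<bar> \<le> C" "?L \<le> C"
    unfolding C_def using abs_le_max_norm[of "\<lambda>s. Vstar s - V 0 s"] by (auto simp: le_max_iff_disj)
  fix d :: real assume "0 < d"
  have "(\<lambda>m. g ^ m * (C - ?L)) \<longlonglongrightarrow> 0"
    using g_ge g_lt by (intro tendsto_mult_left_zero LIMSEQ_power_zero) auto
  then have "eventually (\<lambda>m. g ^ m * (C - ?L) < d) sequentially"
    using \<open>0 < d\<close> by (rule order_tendstoD)
  then obtain m where m: "g ^ m * (C - ?L) < d"
    unfolding eventually_sequentially by blast
  have "eventually (\<lambda>k. ereal (max_norm (\<lambda>s. Vstar s - V k s)) \<le> ereal ?L + ereal d) sequentially"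
    using eventually_error_le[OF C, of m]
  proof eventually_elim
    case (elim k)
    then have "max_norm (\<lambda>s. Vstar s - V k s) \<le> ?L + g ^ m * (C - ?L)"
      by (intro max_norm_le) blast
    with m show ?case by simp
  qed
  then show "limsup (\<lambda>k. ereal (max_norm (\<lambda>s. Vstar s - V k s))) \<le> ereal (\<epsilon> / (1 - g)) + ereal d"
    by (rule Limsup_bounded)
qed

end

theorem theorem2:
  fixes P R :: "'s::finite \<Rightarrow> 'a::finite \<Rightarrow> 's \<Rightarrow> real"
    and g \<epsilon> M :: real
    and Vstar :: "'s \<Rightarrow> real"
    and sq :: "nat \<Rightarrow> 's"
    and w :: "nat \<Rightarrow> real"
    and V :: "nat \<Rightarrow> 's \<Rightarrow> real"
  assumes P_nonneg: "\<And>s a s'. P s a s' \<ge> 0"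
    and P_sum: "\<And>s a. (\<Sum>s'\<in>UNIV. P s a s') = 1"
    and g_ge: "0 \<le> g" and g_lt: "g < 1"
    and Vstar_fix: "bellman P R g Vstar = Vstar"
    and eps_pos: "\<epsilon> > 0"
    and noise: "\<And>k. \<bar>w k\<bar> \<le> \<epsilon>"
    and iter: "\<And>k. V (Suc k) = (V k)(sq k := bellman P R g (V k) (sq k) + w k)"
    and inf_often: "\<And>x. infinite {k. sq k = x}"
    and gaps: "\<And>n. real (epoch sq (Suc n) - epoch sq n) \<le> M"
  shows "limsup (\<lambda>n. ereal (max_norm (\<lambda>s. Vstar s - V (epoch sq n) s)))
           \<le> ereal (M * \<epsilon> / (1 - g))"
proof -
  interpret noisy_async_value_iteration P R g \<epsilon> Vstar sq w V
    using assms by unfold_locales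
  have "1 \<le> M" using gaps[of 0] epoch_less_Suc[OF inf_often, of 0] by simp
  then have limit_le: "\<epsilon> / (1 - g) \<le> M * \<epsilon> / (1 - g)"
    using eps_pos g_lt by (simp add: divide_right_mono)
  have "limsup ((\<lambda>k. ereal (max_norm (\<lambda>s. Vstar s - V k s))) \<circ> epoch sq)
      \<le> limsup (\<lambda>k. ereal (max_norm (\<lambda>s. Vstar s - V k s)))"
    by (rule limsup_subseq_mono[OF strict_mono_epoch[OF inf_often]])
  also have "\<dots> \<le> \<epsilon> / (1 - g)" by (rule limsup_error_le)
  also have "\<dots> \<le> ereal (M * \<epsilon> / (1 - g))" using limit_le by simp
  finally show ?thesis by (simp add: comp_def)
qed

end
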